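(* Let $B_i\colon\mathbb{R}^d\to\mathbb{R}^{d_i}$ be surjective linear maps, $c_i>0$ with $\mathrm{BL}(\mathbf{B},\mathbf{c})<\infty$, and $\theta_i>0$ with $\sum_i\theta_i=1$. Let $0<p\le1$ and define $p_i$ by $c_i(1-\frac1p)=\theta_i(1-\frac1{p_i})$. Let $f=1_\Omega$ be the indicator function of a bounded measurable set $\Omega\subseteq\mathbb{R}^d$ of positive measure, and $f_i:=(B_i)_*f$. Then $$H\!\left(\frac{f^p}{\|f\|_p^p}\right)\le\log\mathrm{BL}(\mathbf{B},\mathbf{c})+\sum_{i=1}^kc_iH\!\left(\frac{f_i^{p_i}}{\|f_i\|_{p_i}^{p_i}}\right).$$
   Context: $\mathrm{BL}(\mathbf{B},\mathbf{c})$ is the best constant in $\int_{\mathbb{R}^d}\prod_if_i(B_ix)^{c_i}dx\le\mathrm{BL}\prod_i(\int f_i)^{c_i}$ over non-negative integrable $f_i$. The pushforward $B_*f$ is defined by $\int B_*f\cdot F=\int f\cdot F\circ B$ for all measurable $F\ge0$. For a probability density $g$, $H(g):=\int g\log\frac1g$. *)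

theory Defs
  imports "HOL-Analysis.Analysis"
begin

definition lebn :: "nat \<Rightarrow> (nat \<Rightarrow> real) measure" where
  "lebn n = Pi\<^sub>M {..<n} (\<lambda>_. lborel)"

definition matapp :: "nat \<Rightarrow> nat \<Rightarrow> (nat \<Rightarrow> nat \<Rightarrow> real) \<Rightarrow> (nat \<Rightarrow> real) \<Rightarrow> (nat \<Rightarrow> real)" where
  "matapp d m M x = restrict (\<lambda>j. \<Sum>l<d. M j l * x l) {..<m}"

definition BL :: "nat \<Rightarrow> nat \<Rightarrow> (nat \<Rightarrow> nat) \<Rightarrow> (nat \<Rightarrow> nat \<Rightarrow> nat \<Rightarrow> real) \<Rightarrow> (nat \<Rightarrow> real) \<Rightarrow> ennreal" where
  "BL d k dd B c = Inf {C. \<forall>f :: nat \<Rightarrow> (nat \<Rightarrow> real) \<Rightarrow> real.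
     (\<forall>i<k. integrable (lebn (dd i)) (f i) \<and> (\<forall>y\<in>space (lebn (dd i)). 0 \<le> f i y)) \<longrightarrow>
     (\<integral>\<^sup>+ x. ennreal (\<Prod>i<k. f i (matapp d (dd i) (B i) x) powr c i) \<partial>lebn d)
       \<le> C * ennreal (\<Prod>i<k. (\<integral> y. f i y \<partial>lebn (dd i)) powr c i)}"

text \<open>Entropy H(g) = int g log(1/g) (with the convention 0 log(1/0) = 0).\<close>
definition Hent :: "'a measure \<Rightarrow> ('a \<Rightarrow> real) \<Rightarrow> real" where
  "Hent M g = (\<integral> x. g x * ln (1 / g x) \<partial>M)"

end

theory Submission
  imports Defs
begin

text \<open>
  For f = 1_Omega the left-hand side is ln |Omega|. The constraint on the exponents forces
  0 < p_i <= 1, and since f_i is supported in a bounded set, q_i = f_i^p_i / ||f_i||_p_i^p_i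
  is a probability density. The Brascamp--Lieb inequality applied to the q_i bounds
  int_Omega prod_i q_i(B_i x)^c_i dx by BL, so Jensen's inequality for ln on Omega gives
  sum_i c_i int_Omega ln q_i(B_i x) dx <= |Omega| ln (BL / |Omega|).
  It remains to show int_Omega ln q_i(B_i x) dx = int f_i ln q_i >= |Omega| int q_i ln q_i
  = -|Omega| H(q_i). Pointwise, (f_i - |Omega| q_i) (ln q_i - K) >= 0 for a suitable
  constant K, because both factors change sign at the same level of f_i; integrating and
  using int f_i = |Omega| and int q_i = 1 gives the claim.
\<close>

lemma mult_ln_ge_minus_one:
  fixes x :: real
  assumes "0 \<le> x"
  shows "-1 \<le> x * ln x"
proof (cases "x = 0")
  case False
  then have "0 < x" using assms by simp
  then have "1 - 1 / x \<le> ln x"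
    using ln_le_minus_one[of "1 / x"] by (simp add: ln_div)
  then have "x * (1 - 1 / x) \<le> x * ln x"
    using \<open>0 < x\<close> by (intro mult_left_mono) auto
  moreover have "x * (1 - 1 / x) = x - 1"
    using \<open>0 < x\<close> by (simp add: field_simps)
  ultimately show ?thesis
    using \<open>0 < x\<close> by linarith
qed simp

lemma ln_le_scaled:
  fixes a t :: real
  assumes "0 < a" "0 < t"
  shows "ln t \<le> a * t - ln a - 1"
  using ln_le_minus_one[of "a * t"] assms by (simp add: ln_mult)

lemma powr_le_1_plus:
  fixes x s :: real
  assumes "0 \<le> x" "0 < s" "s \<le> 1"
  shows "x powr s \<le> 1 + x"
proof (cases "x \<le> 1")
  case True
  then have "x powr s \<le> 1 powr s"
    using assms by (intro powr_mono2) auto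
  then show ?thesis using assms by simp
next
  case False
  then have "x powr s \<le> x powr 1"
    using assms by (intro powr_mono) auto
  then show ?thesis using False by simp
qed

lemma escort_exponent_bounds:
  fixes p q c \<theta> :: real
  assumes "0 < p" "p \<le> 1" "0 < c" "0 < \<theta>" "c * (1 - 1 / p) = \<theta> * (1 - 1 / q)"
  shows "0 < q" and "q \<le> 1"
proof -
  have "c * (1 - 1 / p) \<le> 0"
    using assms by (intro mult_nonneg_nonpos) (auto simp: field_simps)
  then have "1 \<le> 1 / q"
    using assms by (simp add: mult_le_0_iff)
  moreover have "1 / q \<le> 0" if "q \<le> 0"
    using that divide_le_0_iff[of 1 q] by simp
  ultimately show "0 < q"
    by fastforce
  with \<open>1 \<le> 1 / q\<close> show "q \<le> 1"
    by (simp add: le_divide_eq_1)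
qed

lemma mult_neg_part_ln_powr_div_le:
  fixes x s Z :: real
  assumes "0 \<le> x" "0 < s" "s \<le> 1" "0 < Z"
  shows "x * max 0 (- ln (x powr s / Z)) \<le> Z powr (1 / s) * \<bar>ln Z\<bar> + 1"
proof (cases "0 < x \<and> x powr s < Z")
  case False
  then have "x * max 0 (- ln (x powr s / Z)) = 0"
    using assms by (auto simp: not_less)
  moreover have "0 \<le> Z powr (1 / s) * \<bar>ln Z\<bar>" by simp
  ultimately show ?thesis by linarith
next
  case True
  then have "0 < x" and "x powr s < Z" by auto
  have "x = (x powr s) powr (1 / s)"
    using \<open>0 < x\<close> assms by (simp add: powr_powr)
  also have "\<dots> < Z powr (1 / s)"
    using \<open>x powr s < Z\<close> \<open>0 < x\<close> assms by (intro powr_less_mono2) auto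
  finally have "x < Z powr (1 / s)" .
  have "ln (x powr s) < ln Z"
    using \<open>x powr s < Z\<close> \<open>0 < x\<close> assms by (subst ln_less_cancel_iff) auto
  then have "s * ln x < ln Z"
    using \<open>0 < x\<close> by simp
  then have "x * max 0 (- ln (x powr s / Z)) = x * ln Z + s * (- (x * ln x))"
    using \<open>0 < x\<close> assms by (simp add: ln_div algebra_simps)
  also have "\<dots> \<le> Z powr (1 / s) * \<bar>ln Z\<bar> + 1"
  proof -
    have "x * ln Z \<le> x * \<bar>ln Z\<bar>"
      using \<open>0 < x\<close> by (intro mult_left_mono) auto
    also have "\<dots> \<le> Z powr (1 / s) * \<bar>ln Z\<bar>"
      using \<open>x < Z powr (1 / s)\<close> by (intro mult_right_mono) auto
    finally have "x * ln Z \<le> Z powr (1 / s) * \<bar>ln Z\<bar>" .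
    moreover have "s * (- (x * ln x)) \<le> 1"
    proof (cases "0 \<le> - (x * ln x)")
      case True
      then show ?thesis
        using mult_ln_ge_minus_one[of x] \<open>0 < x\<close> assms by (intro mult_le_one) auto
    next
      case False
      then show ?thesis
        using assms mult_nonneg_nonpos[of s "- (x * ln x)"] by linarith
    qed
    ultimately show ?thesis by simp
  qed
  finally show ?thesis .
qed

lemma powr_diff_mult_ln_diff_nonneg:
  fixes a t u :: real
  assumes "0 < t" "0 < u" "0 \<le> a"
  shows "0 \<le> (t powr a - u powr a) * (ln t - ln u)"
proof (cases "u \<le> t")
  case True
  then have "u powr a \<le> t powr a"
    using assms by (intro powr_mono2) auto
  then show ?thesis
    using True assms by (intro mult_nonneg_nonneg) auto
next
  case False
  then have "t powr a \<le> u powr a"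
    using assms by (intro powr_mono2) auto
  then show ?thesis
    using False assms by (intro mult_nonpos_nonpos) auto
qed

text \<open>Both factors change sign at the same point \<open>t\<^sub>0\<close>, where \<open>t\<^sub>0 powr (1 - s) = m / b\<close>.\<close>
lemma ex_threshold_same_sign:
  fixes s b m :: real
  assumes "0 < s" "s \<le> 1" "0 < b" "0 < m" "s = 1 \<Longrightarrow> b = m"
  shows "\<exists>K. \<forall>t\<ge>0. 0 \<le> (t - m * (t powr s / b)) * (ln (t powr s / b) - K)"
proof (cases "s = 1")
  case True
  then show ?thesis using assms by (intro exI[of _ 0]) auto
next
  case False
  define t\<^sub>0 where "t\<^sub>0 = (m / b) powr (1 / (1 - s))"
  have "0 < t\<^sub>0" and t\<^sub>0: "t\<^sub>0 powr (1 - s) = m / b"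
    unfolding t\<^sub>0_def using assms False by (simp_all add: powr_powr)
  show ?thesis
  proof (intro exI[of _ "ln (t\<^sub>0 powr s / b)"] allI impI)
    fix t :: real
    assume "0 \<le> t"
    show "0 \<le> (t - m * (t powr s / b)) * (ln (t powr s / b) - ln (t\<^sub>0 powr s / b))"
    proof (cases "t = 0")
      case False
      then have "0 < t" using \<open>0 \<le> t\<close> by simp
      have "t - m * (t powr s / b) = t powr s * (t powr (1 - s) - t\<^sub>0 powr (1 - s))"
        unfolding t\<^sub>0 using \<open>0 < t\<close> assms by (simp add: algebra_simps powr_diff powr_realpow)
      moreover have "ln (t powr s / b) - ln (t\<^sub>0 powr s / b) = s * (ln t - ln t\<^sub>0)"
        using \<open>0 < t\<close> \<open>0 < t\<^sub>0\<close> assms by (simp add: ln_div algebra_simps)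
      moreover have "0 \<le> (t powr s * s) * ((t powr (1 - s) - t\<^sub>0 powr (1 - s)) * (ln t - ln t\<^sub>0))"
        by (rule mult_nonneg_nonneg[OF _ powr_diff_mult_ln_diff_nonneg])
          (use \<open>0 < t\<close> \<open>0 < t\<^sub>0\<close> assms in auto)
      ultimately show ?thesis
        by (simp only: mult_ac)
    qed simp
  qed
qed

lemma Hent_eq_minus_integral: "Hent M f = - (\<integral> x. f x * ln (f x) \<partial>M)"
proof -
  have "\<And>x. f x * ln (1 / f x) = - (f x * ln (f x))"
    by (simp add: ln_div)
  then show ?thesis
    unfolding Hent_def by simp
qed

lemma Hent_normalised_indicator:
  assumes "\<Omega> \<in> sets M" "0 < measure M \<Omega>"
  shows "Hent M (\<lambda>x. indicator \<Omega> x powr p / (\<integral> z. indicator \<Omega> z powr p \<partial>M)) = ln (measure M \<Omega>)"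
proof -
  have indicator_powr: "(indicator \<Omega> x :: real) powr p = indicator \<Omega> x" for x
    by (simp split: split_indicator)
  have integral_indicator: "(\<integral> x. indicator \<Omega> x \<partial>M) = measure M \<Omega>"
    using sets.sets_into_space[OF assms(1)] by (simp add: Int_absorb2)
  have "Hent M (\<lambda>x. indicator \<Omega> x powr p / (\<integral> z. indicator \<Omega> z powr p \<partial>M))
      = (\<integral> x. indicator \<Omega> x * (ln (measure M \<Omega>) / measure M \<Omega>) \<partial>M)"
    unfolding Hent_def indicator_powr integral_indicator
    by (intro Bochner_Integration.integral_cong) (auto split: split_indicator)
  also have "\<dots> = ln (measure M \<Omega>)"
    using integral_indicator assms(2) by simp
  finally show ?thesis .
qed

section \<open>Pushforwards of indicator functions\<close>

locale indicator_pushforward =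
  fixes M :: "'a measure" and N :: "'b measure" and T :: "'a \<Rightarrow> 'b"
    and \<Omega> :: "'a set" and g :: "'b \<Rightarrow> real"
  assumes measurable_T[measurable]: "T \<in> measurable M N"
    and sets_\<Omega>[measurable]: "\<Omega> \<in> sets M"
    and borel_measurable_g[measurable]: "g \<in> borel_measurable N"
    and g_nonneg: "\<And>y. y \<in> space N \<Longrightarrow> 0 \<le> g y"
    and nn_integral_pushforward:
      "\<And>F. F \<in> borel_measurable N \<Longrightarrow>
        (\<integral>\<^sup>+ y. ennreal (g y) * F y \<partial>N) = (\<integral>\<^sup>+ x. indicator \<Omega> x * F (T x) \<partial>M)"
begin

lemma nn_integral_pushforward_real:
  assumes [measurable]: "h \<in> borel_measurable N"
  shows "(\<integral>\<^sup>+ y. ennreal (g y * h y) \<partial>N) = (\<integral>\<^sup>+ x. ennreal (indicator \<Omega> x * h (T x)) \<partial>M)"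
proof -
  have "(\<integral>\<^sup>+ y. ennreal (g y * h y) \<partial>N) = (\<integral>\<^sup>+ y. ennreal (g y) * ennreal (h y) \<partial>N)"
    using g_nonneg by (intro nn_integral_cong) (simp add: ennreal_mult')
  also have "\<dots> = (\<integral>\<^sup>+ x. indicator \<Omega> x * ennreal (h (T x)) \<partial>M)"
    by (simp add: nn_integral_pushforward)
  also have "\<dots> = (\<integral>\<^sup>+ x. ennreal (indicator \<Omega> x * h (T x)) \<partial>M)"
    by (intro nn_integral_cong) (simp split: split_indicator)
  finally show ?thesis .
qed

lemma integrable_pushforward_iff:
  assumes [measurable]: "h \<in> borel_measurable N"
  shows "integrable N (\<lambda>y. g y * h y) \<longleftrightarrow> integrable M (\<lambda>x. indicator \<Omega> x * h (T x))"
proof -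
  have "(\<integral>\<^sup>+ y. ennreal (norm (g y * h y)) \<partial>N) = (\<integral>\<^sup>+ y. ennreal (g y * \<bar>h y\<bar>) \<partial>N)"
    using g_nonneg by (intro nn_integral_cong) (simp add: abs_mult)
  also have "\<dots> = (\<integral>\<^sup>+ x. ennreal (indicator \<Omega> x * \<bar>h (T x)\<bar>) \<partial>M)"
    by (rule nn_integral_pushforward_real) measurable
  also have "\<dots> = (\<integral>\<^sup>+ x. ennreal (norm (indicator \<Omega> x * h (T x))) \<partial>M)"
    by (intro nn_integral_cong) (simp split: split_indicator)
  finally show ?thesis
    unfolding integrable_iff_bounded by simp
qed

lemma integral_pushforward:
  assumes [measurable]: "h \<in> borel_measurable N"
  shows "(\<integral> y. g y * h y \<partial>N) = (\<integral> x. indicator \<Omega> x * h (T x) \<partial>M)"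
proof (cases "integrable N (\<lambda>y. g y * h y)")
  case True
  then have "integrable M (\<lambda>x. indicator \<Omega> x * h (T x))"
    using integrable_pushforward_iff by simp
  moreover have "(\<integral>\<^sup>+ y. ennreal (- (g y * h y)) \<partial>N)
      = (\<integral>\<^sup>+ x. ennreal (- (indicator \<Omega> x * h (T x))) \<partial>M)"
    using nn_integral_pushforward_real[of "\<lambda>y. - h y"] by simp
  ultimately show ?thesis
    using True by (simp add: real_lebesgue_integral_def nn_integral_pushforward_real)
next
  case False
  then show ?thesis
    using integrable_pushforward_iff by (simp add: not_integrable_integral_eq)
qed

lemma AE_pushforward_pos: "AE x in M. x \<in> \<Omega> \<longrightarrow> 0 < g (T x)"
proof -
  let ?Y = "{y \<in> space N. g y = 0}"
  have "(\<integral>\<^sup>+ x. ennreal (indicator \<Omega> x * indicator ?Y (T x)) \<partial>M)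
      = (\<integral>\<^sup>+ y. ennreal (g y * indicator ?Y y) \<partial>N)"
    by (rule nn_integral_pushforward_real[symmetric]) measurable
  also have "\<dots> = 0"
    by (simp add: nn_integral_0_iff_AE split: split_indicator)
  finally have "AE x in M. indicator \<Omega> x * indicator ?Y (T x) = (0 :: real)"
    by (subst (asm) nn_integral_0_iff_AE) auto
  then show ?thesis
    using AE_space
  proof eventually_elim
    case (elim x)
    then have "T x \<in> space N"
      using measurable_space[OF measurable_T] by simp
    with elim g_nonneg show ?case
      by (auto simp: less_le split: split_indicator)
  qed
qed

lemma AE_pushforward_zero_outside:
  assumes [measurable]: "S \<in> sets N" and "T ` \<Omega> \<subseteq> S"
  shows "AE y in N. y \<notin> S \<longrightarrow> g y = 0"
proof -
  have "(\<integral>\<^sup>+ y. ennreal (g y * indicator (space N - S) y) \<partial>N)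
      = (\<integral>\<^sup>+ x. ennreal (indicator \<Omega> x * indicator (space N - S) (T x)) \<partial>M)"
    by (rule nn_integral_pushforward_real) measurable
  also have "\<dots> = (\<integral>\<^sup>+ x. 0 \<partial>M)"
    using assms(2) by (intro nn_integral_cong) (auto split: split_indicator)
  also have "\<dots> = 0"
    by simp
  finally have "AE y in N. ennreal (g y * indicator (space N - S) y) = 0"
    by (subst (asm) nn_integral_0_iff_AE) auto
  then show ?thesis
    using AE_space by eventually_elim (use g_nonneg in \<open>auto split: split_indicator\<close>)
qed

end

text \<open>For s = p_i this is the normalised power f_i^p_i / ||f_i||_p_i^p_i of the statement,
  also known as the escort density of g.\<close>
definition escort :: "'a measure \<Rightarrow> real \<Rightarrow> ('a \<Rightarrow> real) \<Rightarrow> 'a \<Rightarrow> real" where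
  "escort N s g = (\<lambda>y. g y powr s / (\<integral> z. g z powr s \<partial>N))"

text \<open>The finite-measure set S containing T ` Omega makes g powr s integrable, as
  g powr s \<le> g + indicator S almost everywhere.\<close>
locale escort_pushforward = indicator_pushforward +
  fixes s :: real and S :: "'b set"
  assumes s_pos: "0 < s" and s_le_1: "s \<le> 1"
    and emeasure_\<Omega>_pos: "0 < emeasure M \<Omega>" and emeasure_\<Omega>_finite: "emeasure M \<Omega> < \<infinity>"
    and sets_S[measurable]: "S \<in> sets N" and emeasure_S_finite: "emeasure N S < \<infinity>"
    and T_image_subset: "T ` \<Omega> \<subseteq> S"
begin

lemma nn_integral_g: "(\<integral>\<^sup>+ y. ennreal (g y) \<partial>N) = emeasure M \<Omega>"
  using nn_integral_pushforward[of "\<lambda>_. 1"] by simp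

lemma integrable_g: "integrable N g"
  using nn_integral_g emeasure_\<Omega>_finite g_nonneg
  by (intro integrableI_nonneg) auto

lemma integral_g: "(\<integral> y. g y \<partial>N) = measure M \<Omega>"
  using integral_eq_nn_integral[of g N] nn_integral_g g_nonneg
  by (simp add: measure_def)

lemma measure_\<Omega>_pos: "0 < measure M \<Omega>"
  using emeasure_\<Omega>_pos emeasure_\<Omega>_finite by (simp add: measure_def enn2real_positive_iff)

lemma g_zero_outside: "AE y in N. y \<notin> S \<longrightarrow> g y = 0"
  using AE_pushforward_zero_outside[OF sets_S T_image_subset] .

lemma integrable_powr: "integrable N (\<lambda>y. g y powr s)"
proof (rule Bochner_Integration.integrable_bound)
  show "integrable N (\<lambda>y. g y + indicator S y)"
    using integrable_g emeasure_S_finite by auto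
  show "AE y in N. norm (g y powr s) \<le> norm (g y + indicator S y)"
    using g_zero_outside AE_space
  proof eventually_elim
    case (elim y)
    then show ?case
      using g_nonneg powr_le_1_plus[of "g y" s] s_pos s_le_1 by (auto split: split_indicator)
  qed
qed measurable

lemma integral_powr_pos: "0 < (\<integral> y. g y powr s \<partial>N)"
proof -
  have "(\<integral> y. g y powr s \<partial>N) \<noteq> 0"
  proof
    assume "(\<integral> y. g y powr s \<partial>N) = 0"
    then have "AE y in N. g y = 0"
      using integral_nonneg_eq_0_iff_AE[OF integrable_powr] by simp
    then have "(\<integral> y. g y \<partial>N) = 0"
      by (simp add: integral_eq_zero_AE)
    then show False
      using integral_g measure_\<Omega>_pos by simp
  qed
  moreover have "0 \<le> (\<integral> y. g y powr s \<partial>N)"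
    by (rule integral_nonneg_AE) simp
  ultimately show ?thesis
    by linarith
qed

lemma borel_measurable_escort[measurable]: "escort N s g \<in> borel_measurable N"
  unfolding escort_def by measurable

lemma borel_measurable_escort_T: "(\<lambda>x. escort N s g (T x)) \<in> borel_measurable M"
  by measurable

lemma escort_nonneg: "0 \<le> escort N s g y"
  using integral_powr_pos by (simp add: escort_def)

lemma integrable_escort: "integrable N (escort N s g)"
  unfolding escort_def using integrable_powr by simp

lemma integral_escort: "(\<integral> y. escort N s g y \<partial>N) = 1"
  unfolding escort_def using integral_powr_pos by simp

lemma AE_escort_pos: "AE x in M. x \<in> \<Omega> \<longrightarrow> 0 < escort N s g (T x)"
  using AE_pushforward_pos
  by eventually_elim (use integral_powr_pos in \<open>auto simp: escort_def\<close>)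

lemma escort_zero_outside: "AE y in N. y \<notin> S \<longrightarrow> escort N s g y = 0"
  using g_zero_outside by eventually_elim (simp add: escort_def)

lemma integrable_neg_part_ln_escort:
  "integrable M (\<lambda>x. indicator \<Omega> x * max 0 (- ln (escort N s g (T x))))"
proof -
  define Z where "Z = (\<integral> y. g y powr s \<partial>N)"
  define C where "C = Z powr (1 / s) * \<bar>ln Z\<bar> + 1"
  have "integrable N (\<lambda>y. g y * max 0 (- ln (escort N s g y)))"
  proof (rule Bochner_Integration.integrable_bound)
    show "integrable N (\<lambda>y. C * indicator S y)"
      using emeasure_S_finite by simp
    show "AE y in N. norm (g y * max 0 (- ln (escort N s g y))) \<le> norm (C * indicator S y)"
      using g_zero_outside AE_space
    proof eventually_elim
      case (elim y)
      have "0 \<le> C"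
        unfolding C_def by simp
      then show ?case
        using elim g_nonneg mult_neg_part_ln_powr_div_le[of "g y" s Z] s_pos s_le_1
          integral_powr_pos
        unfolding C_def Z_def escort_def by (auto split: split_indicator)
    qed
  qed measurable
  then show ?thesis
    by (simp add: integrable_pushforward_iff)
qed

lemma escort_mult_ln_le:
  obtains K where "\<And>y. y \<in> space N \<Longrightarrow> measure M \<Omega> * (escort N s g y * ln (escort N s g y))
    \<le> g y * ln (escort N s g y) - K * g y + K * measure M \<Omega> * escort N s g y"
proof -
  have "(\<integral> y. g y powr s \<partial>N) = measure M \<Omega>" if "s = 1"
  proof -
    have "(\<integral> y. g y powr s \<partial>N) = (\<integral> y. g y \<partial>N)"
      using that g_nonneg by (intro Bochner_Integration.integral_cong) auto
    then show ?thesis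
      using integral_g by simp
  qed
  then obtain K where K: "\<And>t. 0 \<le> t \<Longrightarrow> 0 \<le> (t - measure M \<Omega> * (t powr s / (\<integral> y. g y powr s \<partial>N)))
      * (ln (t powr s / (\<integral> y. g y powr s \<partial>N)) - K)"
    using ex_threshold_same_sign[of s "\<integral> y. g y powr s \<partial>N" "measure M \<Omega>"]
      s_pos s_le_1 integral_powr_pos measure_\<Omega>_pos by blast
  show ?thesis
  proof (rule that)
    fix y
    assume "y \<in> space N"
    then have "0 \<le> (g y - measure M \<Omega> * escort N s g y) * (ln (escort N s g y) - K)"
      using K[of "g y"] g_nonneg by (simp add: escort_def)
    then show "measure M \<Omega> * (escort N s g y * ln (escort N s g y))
      \<le> g y * ln (escort N s g y) - K * g y + K * measure M \<Omega> * escort N s g y"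
      by (simp add: algebra_simps)
  qed
qed

lemma integrable_escort_mult_ln:
  assumes "integrable N (\<lambda>y. g y * ln (escort N s g y))"
  shows "integrable N (\<lambda>y. escort N s g y * ln (escort N s g y))"
proof -
  obtain K where K: "\<And>y. y \<in> space N \<Longrightarrow> measure M \<Omega> * (escort N s g y * ln (escort N s g y))
    \<le> g y * ln (escort N s g y) - K * g y + K * measure M \<Omega> * escort N s g y"
    using escort_mult_ln_le by blast
  define \<phi> where "\<phi> y = g y * ln (escort N s g y) - K * g y + K * measure M \<Omega> * escort N s g y" for y
  have "integrable N \<phi>"
    unfolding \<phi>_def using assms integrable_g integrable_escort by simp
  show ?thesis
  proof (rule Bochner_Integration.integrable_bound)
    show "integrable N (\<lambda>y. \<bar>\<phi> y\<bar> / measure M \<Omega> + indicator S y)"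
      using \<open>integrable N \<phi>\<close> emeasure_S_finite by simp
    show "AE y in N. norm (escort N s g y * ln (escort N s g y))
        \<le> norm (\<bar>\<phi> y\<bar> / measure M \<Omega> + indicator S y)"
      using escort_zero_outside AE_space
    proof eventually_elim
      case (elim y)
      show ?case
      proof (cases "y \<in> S")
        case True
        have "escort N s g y * ln (escort N s g y) \<le> \<bar>\<phi> y\<bar> / measure M \<Omega>"
          using K[OF \<open>y \<in> space N\<close>] measure_\<Omega>_pos unfolding \<phi>_def
          by (simp add: field_simps)
        moreover have "-1 \<le> escort N s g y * ln (escort N s g y)"
          using mult_ln_ge_minus_one escort_nonneg by blast
        moreover have "0 \<le> \<bar>\<phi> y\<bar> / measure M \<Omega>"
          by simp
        ultimately show ?thesis
          using True by (simp only: real_norm_def abs_le_iff indicator_simps) linarith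
      qed (use elim in simp)
    qed
  qed measurable
qed

lemma integral_ln_escort_ge:
  assumes "integrable M (\<lambda>x. indicator \<Omega> x * ln (escort N s g (T x)))"
  shows "- measure M \<Omega> * Hent N (escort N s g)
    \<le> (\<integral> x. indicator \<Omega> x * ln (escort N s g (T x)) \<partial>M)"
proof -
  have "integrable N (\<lambda>y. g y * ln (escort N s g y))"
    using assms by (simp add: integrable_pushforward_iff)
  moreover obtain K where "\<And>y. y \<in> space N \<Longrightarrow> measure M \<Omega> * (escort N s g y * ln (escort N s g y))
    \<le> g y * ln (escort N s g y) - K * g y + K * measure M \<Omega> * escort N s g y"
    using escort_mult_ln_le by blast
  ultimately have "(\<integral> y. measure M \<Omega> * (escort N s g y * ln (escort N s g y)) \<partial>N)
    \<le> (\<integral> y. g y * ln (escort N s g y) - K * g y + K * measure M \<Omega> * escort N s g y \<partial>N)"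
    using integrable_escort_mult_ln integrable_g integrable_escort by (intro integral_mono) auto
  also have "\<dots> = (\<integral> y. g y * ln (escort N s g y) \<partial>N)"
    using \<open>integrable N (\<lambda>y. g y * ln (escort N s g y))\<close> integrable_g integrable_escort
    by (simp add: integral_g integral_escort)
  finally show ?thesis
    by (simp add: Hent_eq_minus_integral integral_pushforward)
qed

end

section \<open>The entropy inequality for abstract measures\<close>

lemma integrable_of_weighted_sum_le:
  fixes L :: "'i \<Rightarrow> 'a \<Rightarrow> real"
  assumes "finite I" "j \<in> I"
    and [measurable]: "\<And>i. i \<in> I \<Longrightarrow> L i \<in> borel_measurable M"
    and "\<And>i. i \<in> I \<Longrightarrow> integrable M (\<lambda>x. max 0 (- L i x))"
    and c: "\<And>i. i \<in> I \<Longrightarrow> 0 < c i"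
    and "integrable M R" and bound: "AE x in M. (\<Sum>i\<in>I. c i * L i x) \<le> R x"
  shows "integrable M (L j)"
proof (rule Bochner_Integration.integrable_bound)
  let ?Neg = "\<lambda>x. \<Sum>i\<in>I. c i * max 0 (- L i x)"
  show "integrable M (\<lambda>x. (\<bar>R x\<bar> + ?Neg x) / c j + max 0 (- L j x))"
    using assms by (intro Bochner_Integration.integrable_add integrable_divide_zero) auto
  show "AE x in M. norm (L j x) \<le> norm ((\<bar>R x\<bar> + ?Neg x) / c j + max 0 (- L j x))"
    using bound
  proof eventually_elim
    case (elim x)
    have "\<And>i. i \<in> I \<Longrightarrow> 0 \<le> c i * max 0 (L i x)"
      using c by (simp add: less_imp_le)
    then have "c j * max 0 (L j x) \<le> (\<Sum>i\<in>I. c i * max 0 (L i x))"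
      using assms(1,2) by (intro member_le_sum) auto
    also have "\<dots> = (\<Sum>i\<in>I. c i * L i x + c i * max 0 (- L i x))"
      by (intro sum.cong) (auto simp: max_def algebra_simps)
    also have "\<dots> = (\<Sum>i\<in>I. c i * L i x) + ?Neg x"
      by (simp add: sum.distrib)
    also have "\<dots> \<le> \<bar>R x\<bar> + ?Neg x"
      using elim by simp
    finally have "max 0 (L j x) \<le> (\<bar>R x\<bar> + ?Neg x) / c j"
      by (simp only: pos_le_divide_eq[OF c[OF \<open>j \<in> I\<close>]] mult.commute)
    moreover have "0 \<le> ?Neg x"
      using c by (intro sum_nonneg) (simp add: less_imp_le)
    then have "norm ((\<bar>R x\<bar> + ?Neg x) / c j + max 0 (- L j x))
        = (\<bar>R x\<bar> + ?Neg x) / c j + max 0 (- L j x)"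
      using c[OF \<open>j \<in> I\<close>] by simp
    moreover have "norm (L j x) \<le> max 0 (L j x) + max 0 (- L j x)"
      by (simp add: abs_if)
    ultimately show ?case
      by linarith
  qed
qed (use assms in simp)

text \<open>Jensen's inequality for ln on Omega, via ln t \<le> a t - ln a - 1 with a = |Omega| / \<beta>.
  Only the negative parts of the L i are assumed integrable; the bound controls the
  positive parts.\<close>
lemma weighted_ln_sum_integral_le:
  fixes L :: "'i \<Rightarrow> 'a \<Rightarrow> real" and F :: "'a \<Rightarrow> real"
  assumes [measurable]: "\<Omega> \<in> sets M"
    and L_measurable: "\<And>i. i \<in> I \<Longrightarrow> L i \<in> borel_measurable M"
    and "emeasure M \<Omega> < \<infinity>" "0 < measure M \<Omega>" "0 < \<beta>"
    and int_F: "integrable M (\<lambda>x. indicator \<Omega> x * F x)"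
    and integral_F: "(\<integral> x. indicator \<Omega> x * F x \<partial>M) \<le> \<beta>"
    and "finite I" and c: "\<And>i. i \<in> I \<Longrightarrow> 0 < c i"
    and neg: "\<And>i. i \<in> I \<Longrightarrow> integrable M (\<lambda>x. max 0 (- L i x))"
    and bound: "AE x in M. (\<Sum>i\<in>I. c i * L i x) \<le> indicator \<Omega> x * ln (F x)
      \<and> (x \<in> \<Omega> \<longrightarrow> 0 < F x)"
  shows "\<And>i. i \<in> I \<Longrightarrow> integrable M (L i)"
    and "(\<Sum>i\<in>I. c i * (\<integral> x. L i x \<partial>M)) \<le> measure M \<Omega> * (ln \<beta> - ln (measure M \<Omega>))"
proof -
  define a where "a = measure M \<Omega> / \<beta>"
  have "0 < a"
    unfolding a_def using assms by simp
  define R where "R x = a * (indicator \<Omega> x * F x) - (ln a + 1) * indicator \<Omega> x" for x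
  have "integrable M R"
    unfolding R_def using int_F \<open>emeasure M \<Omega> < \<infinity>\<close> by simp
  have R_bound: "AE x in M. (\<Sum>i\<in>I. c i * L i x) \<le> R x"
    using bound
  proof eventually_elim
    case (elim x)
    show ?case
    proof (cases "x \<in> \<Omega>")
      case True
      then have "(\<Sum>i\<in>I. c i * L i x) \<le> ln (F x)" and "0 < F x"
        using elim by auto
      then show ?thesis
        using ln_le_scaled[OF \<open>0 < a\<close> \<open>0 < F x\<close>] True unfolding R_def by simp
    next
      case False
      then show ?thesis
        using elim unfolding R_def by simp
    qed
  qed
  show integrable_L: "integrable M (L i)" if "i \<in> I" for i
    by (rule integrable_of_weighted_sum_le[OF \<open>finite I\<close> that L_measurable neg c
          \<open>integrable M R\<close> R_bound])
  have "(\<Sum>i\<in>I. c i * (\<integral> x. L i x \<partial>M)) = (\<integral> x. (\<Sum>i\<in>I. c i * L i x) \<partial>M)"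
    using integrable_L by simp
  also have "\<dots> \<le> (\<integral> x. R x \<partial>M)"
    using integrable_L by (intro integral_mono_AE[OF _ \<open>integrable M R\<close> R_bound]) simp
  also have "\<dots> = a * (\<integral> x. indicator \<Omega> x * F x \<partial>M) - (ln a + 1) * measure M \<Omega>"
    unfolding R_def using int_F \<open>emeasure M \<Omega> < \<infinity>\<close> by simp
  also have "\<dots> \<le> a * \<beta> - (ln a + 1) * measure M \<Omega>"
    using integral_F \<open>0 < a\<close> by simp
  also have "\<dots> = measure M \<Omega> * (ln \<beta> - ln (measure M \<Omega>))"
    unfolding a_def using assms by (simp add: ln_div algebra_simps)
  finally show "(\<Sum>i\<in>I. c i * (\<integral> x. L i x \<partial>M)) \<le> measure M \<Omega> * (ln \<beta> - ln (measure M \<Omega>))" .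
qed

lemma nn_integral_indicator_mult_pos:
  assumes [measurable]: "\<Omega> \<in> sets M" "F \<in> borel_measurable M"
    and "0 < emeasure M \<Omega>" and "AE x in M. x \<in> \<Omega> \<longrightarrow> 0 < F x"
  shows "0 < (\<integral>\<^sup>+ x. ennreal (indicator \<Omega> x * F x) \<partial>M)"
proof (rule ccontr)
  assume "\<not> ?thesis"
  then have "(\<integral>\<^sup>+ x. ennreal (indicator \<Omega> x * F x) \<partial>M) = 0"
    by simp
  then have "AE x in M. ennreal (indicator \<Omega> x * F x) = 0"
    by (subst (asm) nn_integral_0_iff_AE) auto
  with assms(4) have "AE x in M. x \<notin> \<Omega>"
    by eventually_elim (auto split: split_indicator)
  then have "\<Omega> \<in> null_sets M"
    by (simp add: AE_iff_null_sets)
  with assms(3) show False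
    by (simp add: null_setsD1)
qed

lemma integrable_integral_le_of_nn_integral_le:
  fixes f :: "'a \<Rightarrow> real"
  assumes [measurable]: "f \<in> borel_measurable M" and nonneg: "\<And>x. 0 \<le> f x"
    and le: "(\<integral>\<^sup>+ x. ennreal (f x) \<partial>M) \<le> C" and "C < \<infinity>"
  shows "integrable M f" and "(\<integral> x. f x \<partial>M) \<le> enn2real C"
proof -
  show "integrable M f"
    using le \<open>C < \<infinity>\<close> nonneg by (intro integrableI_nonneg) auto
  have "(\<integral> x. f x \<partial>M) = enn2real (\<integral>\<^sup>+ x. ennreal (f x) \<partial>M)"
    using nonneg by (intro integral_eq_nn_integral) auto
  also have "\<dots> \<le> enn2real C"
    using le \<open>C < \<infinity>\<close> by (intro enn2real_mono) auto
  finally show "(\<integral> x. f x \<partial>M) \<le> enn2real C" .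
qed

locale brascamp_lieb_escorts =
  fixes M :: "'a measure" and N :: "nat \<Rightarrow> 'b measure" and T :: "nat \<Rightarrow> 'a \<Rightarrow> 'b"
    and \<Omega> :: "'a set" and g :: "nat \<Rightarrow> 'b \<Rightarrow> real" and s :: "nat \<Rightarrow> real"
    and S :: "nat \<Rightarrow> 'b set" and k :: nat and c :: "nat \<Rightarrow> real" and C :: ennreal
  assumes sets_\<Omega>[measurable]: "\<Omega> \<in> sets M"
    and emeasure_\<Omega>_pos: "0 < emeasure M \<Omega>" and emeasure_\<Omega>_finite: "emeasure M \<Omega> < \<infinity>"
    and escort: "\<And>i. i < k \<Longrightarrow> escort_pushforward M (N i) (T i) \<Omega> (g i) (s i) (S i)"
    and c_pos: "\<And>i. i < k \<Longrightarrow> 0 < c i"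
    and BL: "\<And>f. (\<And>i. i < k \<Longrightarrow> integrable (N i) (f i) \<and> (\<forall>y\<in>space (N i). 0 \<le> f i y)
                    \<and> (\<integral> y. f i y \<partial>N i) = 1) \<Longrightarrow>
               (\<integral>\<^sup>+ x. ennreal (\<Prod>i<k. f i (T i x) powr c i) \<partial>M) \<le> C"
    and BL_finite: "C < \<infinity>"
begin

abbreviation q :: "nat \<Rightarrow> 'b \<Rightarrow> real" where
  "q i \<equiv> escort (N i) (s i) (g i)"

definition F :: "'a \<Rightarrow> real" where
  "F x = (\<Prod>i<k. q i (T i x) powr c i)"

definition L :: "nat \<Rightarrow> 'a \<Rightarrow> real" where
  "L i x = indicator \<Omega> x * ln (q i (T i x))"

lemma measure_\<Omega>_pos: "0 < measure M \<Omega>"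
  using emeasure_\<Omega>_pos emeasure_\<Omega>_finite by (simp add: measure_def enn2real_positive_iff)

lemma borel_measurable_escort_T: "i < k \<Longrightarrow> (\<lambda>x. q i (T i x)) \<in> borel_measurable M"
  using escort_pushforward.borel_measurable_escort_T[OF escort] .

lemma borel_measurable_F[measurable]: "F \<in> borel_measurable M"
  unfolding F_def using borel_measurable_escort_T
  by (intro borel_measurable_prod powr_real_measurable) auto

lemma F_nonneg: "0 \<le> F x"
  unfolding F_def by (simp add: prod_nonneg)

lemma nn_integral_F_le: "(\<integral>\<^sup>+ x. ennreal (indicator \<Omega> x * F x) \<partial>M) \<le> C"
proof -
  have "(\<integral>\<^sup>+ x. ennreal (indicator \<Omega> x * F x) \<partial>M) \<le> (\<integral>\<^sup>+ x. ennreal (F x) \<partial>M)"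
    using F_nonneg by (intro nn_integral_mono) (simp split: split_indicator)
  also have "\<dots> \<le> C"
    unfolding F_def
    using escort_pushforward.integrable_escort[OF escort] escort_pushforward.escort_nonneg[OF escort]
      escort_pushforward.integral_escort[OF escort]
    by (intro BL) blast
  finally show ?thesis .
qed

lemma integrable_F: "integrable M (\<lambda>x. indicator \<Omega> x * F x)"
  and integral_F_le: "(\<integral> x. indicator \<Omega> x * F x \<partial>M) \<le> enn2real C"
  using integrable_integral_le_of_nn_integral_le[OF _ _ nn_integral_F_le BL_finite] F_nonneg by simp_all

lemma AE_escorts_pos: "AE x in M. x \<in> \<Omega> \<longrightarrow> 0 < F x \<and> (\<forall>i<k. 0 < q i (T i x))"
proof -
  have "AE x in M. \<forall>i\<in>{..<k}. x \<in> \<Omega> \<longrightarrow> 0 < q i (T i x)"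
    by (rule AE_finite_allI) (simp_all add: escort_pushforward.AE_escort_pos[OF escort])
  then show ?thesis
  proof eventually_elim
    case (elim x)
    show ?case
    proof
      assume "x \<in> \<Omega>"
      then have "\<forall>i<k. 0 < q i (T i x)"
        using elim by simp
      moreover from this have "0 < F x"
        unfolding F_def by (intro prod_pos) (metis lessThan_iff powr_gt_zero less_irrefl)
      ultimately show "0 < F x \<and> (\<forall>i<k. 0 < q i (T i x))"
        by simp
    qed
  qed
qed

lemma BL_pos: "0 < enn2real C"
proof -
  have "AE x in M. x \<in> \<Omega> \<longrightarrow> 0 < F x"
    using AE_escorts_pos by eventually_elim simp
  then have "0 < (\<integral>\<^sup>+ x. ennreal (indicator \<Omega> x * F x) \<partial>M)"
    by (intro nn_integral_indicator_mult_pos) (simp_all add: emeasure_\<Omega>_pos)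
  then show ?thesis
    using nn_integral_F_le BL_finite by (simp add: enn2real_positive_iff)
qed

lemma weighted_sum_L_le_ln_F:
  "AE x in M. (\<Sum>i<k. c i * L i x) \<le> indicator \<Omega> x * ln (F x) \<and> (x \<in> \<Omega> \<longrightarrow> 0 < F x)"
  using AE_escorts_pos
proof eventually_elim
  case (elim x)
  show ?case
  proof (cases "x \<in> \<Omega>")
    case True
    with elim have "ln (F x) = (\<Sum>i<k. c i * ln (q i (T i x)))"
      unfolding F_def by (subst ln_prod) auto
    with True elim show ?thesis
      unfolding L_def by simp
  qed (simp add: L_def)
qed

lemma integrable_neg_part_L: "i < k \<Longrightarrow> integrable M (\<lambda>x. max 0 (- L i x))"
proof -
  have "max 0 (- L i x) = indicator \<Omega> x * max 0 (- ln (q i (T i x)))" for i x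
    unfolding L_def by (simp split: split_indicator)
  then show "i < k \<Longrightarrow> integrable M (\<lambda>x. max 0 (- L i x))"
    using escort_pushforward.integrable_neg_part_ln_escort[OF escort] by simp
qed

lemma integrable_L: "i < k \<Longrightarrow> integrable M (L i)"
  and weighted_sum_integral_L_le:
    "(\<Sum>i<k. c i * (\<integral> x. L i x \<partial>M)) \<le> measure M \<Omega> * (ln (enn2real C) - ln (measure M \<Omega>))"
proof -
  have measurable: "\<And>i. i \<in> {..<k} \<Longrightarrow> L i \<in> borel_measurable M"
    unfolding L_def using borel_measurable_escort_T by simp
  have pos: "\<And>i. i \<in> {..<k} \<Longrightarrow> 0 < c i"
    using c_pos by simp
  have neg: "\<And>i. i \<in> {..<k} \<Longrightarrow> integrable M (\<lambda>x. max 0 (- L i x))"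
    using integrable_neg_part_L by simp
  note weighted = weighted_ln_sum_integral_le[OF sets_\<Omega> measurable emeasure_\<Omega>_finite
      measure_\<Omega>_pos BL_pos integrable_F integral_F_le finite_lessThan pos neg weighted_sum_L_le_ln_F]
  from weighted show "i < k \<Longrightarrow> integrable M (L i)"
    by simp
  from weighted show "(\<Sum>i<k. c i * (\<integral> x. L i x \<partial>M))
      \<le> measure M \<Omega> * (ln (enn2real C) - ln (measure M \<Omega>))"
    by simp
qed

lemma entropy_le_integral_L: "i < k \<Longrightarrow> - measure M \<Omega> * Hent (N i) (q i) \<le> (\<integral> x. L i x \<partial>M)"
  using escort_pushforward.integral_ln_escort_ge[OF escort integrable_L[unfolded L_def]]
  unfolding L_def .

theorem ln_measure_le_ln_BL_plus_entropy:
  "ln (measure M \<Omega>) \<le> ln (enn2real C) + (\<Sum>i<k. c i * Hent (N i) (q i))"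
proof -
  have "- measure M \<Omega> * (\<Sum>i<k. c i * Hent (N i) (q i))
      = (\<Sum>i<k. c i * (- measure M \<Omega> * Hent (N i) (q i)))"
    by (simp add: sum_distrib_left algebra_simps)
  also have "\<dots> \<le> (\<Sum>i<k. c i * (\<integral> x. L i x \<partial>M))"
    using entropy_le_integral_L c_pos by (intro sum_mono mult_left_mono) (auto simp: less_imp_le)
  also have "\<dots> \<le> measure M \<Omega> * (ln (enn2real C) - ln (measure M \<Omega>))"
    by (rule weighted_sum_integral_L_le)
  finally have "measure M \<Omega> * ln (measure M \<Omega>)
      \<le> measure M \<Omega> * (ln (enn2real C) + (\<Sum>i<k. c i * Hent (N i) (q i)))"
    by (simp add: algebra_simps)
  then show ?thesis
    using measure_\<Omega>_pos by (rule mult_left_le_imp_le)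
qed

end

section \<open>Lebesgue measure on R^n\<close>

definition cube :: "nat \<Rightarrow> real \<Rightarrow> (nat \<Rightarrow> real) set" where
  "cube n R = PiE {..<n} (\<lambda>_. {-R..R})"

lemma sets_cube[measurable]: "cube n R \<in> sets (lebn n)"
  unfolding cube_def lebn_def by (intro sets_PiM_I_finite) auto

lemma emeasure_cube_finite: "emeasure (lebn n) (cube n R) < \<infinity>"
proof -
  interpret product_sigma_finite "\<lambda>_::nat. lborel :: real measure"
    by (simp add: product_sigma_finite_def lborel.sigma_finite_measure_axioms)
  have "emeasure (lebn n) (cube n R) = (\<Prod>i<n. emeasure lborel {-R..R})"
    unfolding lebn_def cube_def by (intro emeasure_PiM) auto
  then show ?thesis
    by (simp add: emeasure_lborel_Icc_eq ennreal_power[symmetric] power_less_top_ennreal)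
qed

lemma subset_cube:
  assumes "\<Omega> \<subseteq> space (lebn n)" and "\<forall>x\<in>\<Omega>. \<forall>j<n. \<bar>x j\<bar> \<le> R"
  shows "\<Omega> \<subseteq> cube n R"
proof
  fix x
  assume "x \<in> \<Omega>"
  then have "x \<in> PiE {..<n} (\<lambda>_. UNIV)" and "\<forall>j<n. \<bar>x j\<bar> \<le> R"
    using assms by (auto simp: lebn_def space_PiM)
  then show "x \<in> cube n R"
    unfolding cube_def by (auto simp: PiE_iff abs_le_iff)
qed

lemma matapp_measurable[measurable]: "matapp d m A \<in> measurable (lebn d) (lebn m)"
  unfolding matapp_def lebn_def by measurable

lemma matapp_cube:
  assumes "x \<in> cube d R"
  shows "matapp d m A x \<in> cube m ((\<Sum>j<m. \<Sum>l<d. \<bar>A j l\<bar>) * \<bar>R\<bar>)"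
proof -
  have "(\<Sum>l<d. A j l * x l) \<in> {-(\<Sum>j<m. \<Sum>l<d. \<bar>A j l\<bar>) * \<bar>R\<bar>..(\<Sum>j<m. \<Sum>l<d. \<bar>A j l\<bar>) * \<bar>R\<bar>}"
    if "j < m" for j
  proof -
    have "\<bar>\<Sum>l<d. A j l * x l\<bar> \<le> (\<Sum>l<d. \<bar>A j l * x l\<bar>)"
      by (rule sum_abs)
    also have "\<dots> \<le> (\<Sum>l<d. \<bar>A j l\<bar> * \<bar>R\<bar>)"
    proof (rule sum_mono)
      fix l
      assume "l \<in> {..<d}"
      then have "x l \<in> {-R..R}"
        using assms unfolding cube_def by (auto simp: PiE_iff)
      then have "\<bar>x l\<bar> \<le> \<bar>R\<bar>"
        by auto
      then show "\<bar>A j l * x l\<bar> \<le> \<bar>A j l\<bar> * \<bar>R\<bar>"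
        by (simp add: abs_mult mult_left_mono)
    qed
    also have "\<dots> = (\<Sum>l<d. \<bar>A j l\<bar>) * \<bar>R\<bar>"
      by (simp add: sum_distrib_right)
    also have "\<dots> \<le> (\<Sum>j<m. \<Sum>l<d. \<bar>A j l\<bar>) * \<bar>R\<bar>"
      using that by (intro mult_right_mono member_le_sum) (auto intro: sum_nonneg)
    finally show ?thesis
      by (simp add: abs_le_iff)
  qed
  then show ?thesis
    unfolding matapp_def cube_def by auto
qed

lemma nn_integral_le_BL:
  assumes "\<forall>i<k. integrable (lebn (dd i)) (f i) \<and> (\<forall>y\<in>space (lebn (dd i)). 0 \<le> f i y)"
    and "\<And>i. i < k \<Longrightarrow> (\<integral> y. f i y \<partial>lebn (dd i)) = 1"
  shows "(\<integral>\<^sup>+ x. ennreal (\<Prod>i<k. f i (matapp d (dd i) (B i) x) powr c i) \<partial>lebn d) \<le> BL d k dd B c"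
  unfolding BL_def
proof (rule Inf_greatest)
  fix C
  assume "C \<in> {C. \<forall>f. (\<forall>i<k. integrable (lebn (dd i)) (f i) \<and> (\<forall>y\<in>space (lebn (dd i)). 0 \<le> f i y)) \<longrightarrow>
     (\<integral>\<^sup>+ x. ennreal (\<Prod>i<k. f i (matapp d (dd i) (B i) x) powr c i) \<partial>lebn d)
       \<le> C * ennreal (\<Prod>i<k. (\<integral> y. f i y \<partial>lebn (dd i)) powr c i)}"
  then have "(\<integral>\<^sup>+ x. ennreal (\<Prod>i<k. f i (matapp d (dd i) (B i) x) powr c i) \<partial>lebn d)
       \<le> C * ennreal (\<Prod>i<k. (\<integral> y. f i y \<partial>lebn (dd i)) powr c i)"
    using assms(1) by simp
  also have "(\<Prod>i<k. (\<integral> y. f i y \<partial>lebn (dd i)) powr c i) = 1"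
    using assms(2) by (intro prod.neutral) simp
  finally show "(\<integral>\<^sup>+ x. ennreal (\<Prod>i<k. f i (matapp d (dd i) (B i) x) powr c i) \<partial>lebn d) \<le> C"
    by simp
qed

lemma emeasure_completion_subset_cube_finite:
  assumes "\<Omega> \<in> sets (completion (lebn n))" and "\<Omega> \<subseteq> cube n R"
  shows "emeasure (completion (lebn n)) \<Omega> < \<infinity>"
proof -
  have "emeasure (completion (lebn n)) \<Omega> \<le> emeasure (completion (lebn n)) (cube n R)"
    using assms by (intro emeasure_mono sets_completionI_sets sets_cube)
  also have "\<dots> < \<infinity>"
    using emeasure_cube_finite by (simp add: sets_cube)
  finally show ?thesis .
qed

lemma escort_pushforward_matapp:
  assumes "\<Omega> \<in> sets (completion (lebn d))" and "0 < emeasure (completion (lebn d)) \<Omega>"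
    and "\<Omega> \<subseteq> cube d R"
    and "g \<in> borel_measurable (lebn m)" and "\<forall>y\<in>space (lebn m). 0 \<le> g y"
    and "\<forall>F\<in>borel_measurable (lebn m). (\<integral>\<^sup>+ y. ennreal (g y) * F y \<partial>lebn m)
      = (\<integral>\<^sup>+ x. indicator \<Omega> x * F (matapp d m A x) \<partial>completion (lebn d))"
    and "0 < s" and "s \<le> 1"
  shows "escort_pushforward (completion (lebn d)) (lebn m) (matapp d m A) \<Omega> g s
    (cube m ((\<Sum>j<m. \<Sum>l<d. \<bar>A j l\<bar>) * \<bar>R\<bar>))"
proof (intro escort_pushforward.intro indicator_pushforward.intro escort_pushforward_axioms.intro)
  show "matapp d m A \<in> measurable (completion (lebn d)) (lebn m)"
    by (intro measurable_completion matapp_measurable)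
  show "emeasure (completion (lebn d)) \<Omega> < \<infinity>"
    using assms(1,3) by (rule emeasure_completion_subset_cube_finite)
  show "matapp d m A ` \<Omega> \<subseteq> cube m ((\<Sum>j<m. \<Sum>l<d. \<bar>A j l\<bar>) * \<bar>R\<bar>)"
    using assms(3) matapp_cube by blast
qed (use assms emeasure_cube_finite sets_cube in simp_all)

theorem proposition5p4:
  fixes d k :: nat and dd :: "nat \<Rightarrow> nat" and B :: "nat \<Rightarrow> nat \<Rightarrow> nat \<Rightarrow> real"
    and c \<theta> pp :: "nat \<Rightarrow> real" and p :: real and \<Omega> :: "(nat \<Rightarrow> real) set"
    and g :: "nat \<Rightarrow> (nat \<Rightarrow> real) \<Rightarrow> real"
  assumes surj: "\<forall>i<k. matapp d (dd i) (B i) ` space (lebn d) = space (lebn (dd i))"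
    and c_pos: "\<forall>i<k. 0 < c i"
    and BL_fin: "BL d k dd B c < \<infinity>"
    and theta_pos: "\<forall>i<k. 0 < \<theta> i"
    and theta_sum: "(\<Sum>i<k. \<theta> i) = 1"
    and p: "0 < p" "p \<le> 1"
    and pp: "\<forall>i<k. c i * (1 - 1 / p) = \<theta> i * (1 - 1 / pp i)"
    and \<Omega>_meas: "\<Omega> \<in> sets (completion (lebn d))"
    and \<Omega>_bdd: "\<exists>R. \<forall>x\<in>\<Omega>. \<forall>j<d. \<bar>x j\<bar> \<le> R"
    and \<Omega>_pos: "0 < emeasure (completion (lebn d)) \<Omega>"
    and g_meas: "\<forall>i<k. g i \<in> borel_measurable (lebn (dd i))"
    and g_nonneg: "\<forall>i<k. \<forall>y\<in>space (lebn (dd i)). 0 \<le> g i y"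
    and g_push: "\<forall>i<k. \<forall>F \<in> borel_measurable (lebn (dd i)).
        (\<integral>\<^sup>+ y. ennreal (g i y) * F y \<partial>lebn (dd i))
          = (\<integral>\<^sup>+ x. indicator \<Omega> x * F (matapp d (dd i) (B i) x) \<partial>completion (lebn d))"
  shows "Hent (completion (lebn d))
           (\<lambda>x. (indicator \<Omega> x :: real) powr p
                 / (\<integral> z. (indicator \<Omega> z :: real) powr p \<partial>completion (lebn d)))
         \<le> ln (enn2real (BL d k dd B c))
           + (\<Sum>i<k. c i * Hent (lebn (dd i))
                (\<lambda>y. g i y powr pp i / (\<integral> z. g i z powr pp i \<partial>lebn (dd i))))"
proof -
  obtain R where "\<forall>x\<in>\<Omega>. \<forall>j<d. \<bar>x j\<bar> \<le> R"
    using \<Omega>_bdd by blast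
  then have "\<Omega> \<subseteq> cube d R"
    using sets.sets_into_space[OF \<Omega>_meas] by (intro subset_cube) simp_all
  have escort: "escort_pushforward (completion (lebn d)) (lebn (dd i)) (matapp d (dd i) (B i)) \<Omega>
      (g i) (pp i) (cube (dd i) ((\<Sum>j<dd i. \<Sum>l<d. \<bar>B i j l\<bar>) * \<bar>R\<bar>))" if "i < k" for i
    using that g_meas g_nonneg g_push escort_exponent_bounds[OF p, of "c i" "\<theta> i" "pp i"]
      c_pos theta_pos pp
    by (intro escort_pushforward_matapp[OF \<Omega>_meas \<Omega>_pos \<open>\<Omega> \<subseteq> cube d R\<close>]) blast+
  have BL: "(\<integral>\<^sup>+ x. ennreal (\<Prod>i<k. f i (matapp d (dd i) (B i) x) powr c i) \<partial>completion (lebn d))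
      \<le> BL d k dd B c"
    if "\<And>i. i < k \<Longrightarrow> integrable (lebn (dd i)) (f i) \<and> (\<forall>y\<in>space (lebn (dd i)). 0 \<le> f i y)
      \<and> (\<integral> y. f i y \<partial>lebn (dd i)) = 1" for f
    using that by (simp add: nn_integral_completion nn_integral_le_BL)
  have \<Omega>_finite: "emeasure (completion (lebn d)) \<Omega> < \<infinity>"
    using \<Omega>_meas \<open>\<Omega> \<subseteq> cube d R\<close> by (rule emeasure_completion_subset_cube_finite)
  then have "0 < measure (completion (lebn d)) \<Omega>"
    using \<Omega>_pos by (simp add: measure_def enn2real_positive_iff)
  moreover have "\<And>i. i < k \<Longrightarrow> 0 < c i"
    using c_pos by blast
  ultimately show ?thesis
    using brascamp_lieb_escorts.ln_measure_le_ln_BL_plus_entropy[OF brascamp_lieb_escorts.intro,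
        OF \<Omega>_meas \<Omega>_pos \<Omega>_finite escort _ BL BL_fin] \<Omega>_meas
    by (simp add: Hent_normalised_indicator escort_def)
qed

end
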